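(* Let $a,b,c\in\mathbb{R}$ be such that the matrix $$B=\begin{pmatrix}1&a&b\\ a&1&c\\ b&c&1\end{pmatrix}$$ is positive semidefinite. Let $\mathbb{I}\subseteq[0,\infty)$ be an interval and let $f:\mathbb{I}\to[-1,1]$ be a strictly decreasing function with range exactly $[-1,1]$. Suppose that $$f(p+q)=f(p)f(q)-\sqrt{1-f(p)^2}\,\sqrt{1-f(q)^2}$$ for all $p,q$ with $p,q,p+q\in\mathbb{I}$. Then for every arrangement $(x,y,z)$ of $(a,b,c)$, $$f^{-1}(x)\le f^{-1}(y)+f^{-1}(z).$$
   Context: Positive semidefinite means symmetric (Hermitian) with nonnegative quadratic form. $f^{-1}$ denotes the inverse function of $f$, defined on $[-1,1]$. *)

theory Defs
  imports "HOL-Analysis.Analysis" "HOL-Library.Multiset"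
begin

definition psd_matrix :: "real^'n^'n \<Rightarrow> bool" where
  "psd_matrix M \<longleftrightarrow> transpose M = M \<and> (\<forall>v. v \<bullet> (M *v v) \<ge> 0)"

definition gram3 :: "real \<Rightarrow> real \<Rightarrow> real \<Rightarrow> real^3^3" where
  "gram3 a b c = vector [vector [1, a, b], vector [a, 1, c], vector [b, c, 1]]"

end

theory Submission
  imports Defs
begin

(* Think of f as cos restricted to I, so that the functional equation is the
   addition formula cos (p + q) = cos p cos q - sin p sin q and f\<^sup>-\<^sup>1 plays the role of arccos.
   The theorem then is the triangle inequality for the angles of a Gram matrix.

   Matrix side: positive semidefiniteness of gram3 a b c is a statement about the quadratic form
   v1\<^sup>2 + v2\<^sup>2 + v3\<^sup>2 + 2a v1 v2 + 2b v1 v3 + 2c v2 v3.  The form is invariant (up to renaming)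
   under permuting a, b, c, and eliminating v3 leaves the binary form with coefficients
   1 - b\<^sup>2, a - b c, 1 - c\<^sup>2 ("Schur complement"), whose discriminant condition gives the
   "cosine of a sum" bound  b c - sqrt (1 - b\<^sup>2) sqrt (1 - c\<^sup>2) \<le> a.

   Function side: for f strictly decreasing from I onto [-1, 1], f\<^sup>-\<^sup>1 is antitone on [-1, 1];
   with p = f\<^sup>-\<^sup>1 y, q = f\<^sup>-\<^sup>1 z the bound reads f (p + q) \<le> x when p + q \<in> I, hence
   f\<^sup>-\<^sup>1 x \<le> p + q; and if p + q \<notin> I, the interval property forces f\<^sup>-\<^sup>1 x < p + q. *)

definition nonneg_gram3 :: "real \<Rightarrow> real \<Rightarrow> real \<Rightarrow> bool" where
  "nonneg_gram3 a b c \<longleftrightarrow>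
     (\<forall>v1 v2 v3. 0 \<le> v1\<^sup>2 + v2\<^sup>2 + v3\<^sup>2 + 2 * a * v1 * v2 + 2 * b * v1 * v3 + 2 * c * v2 * v3)"

lemma psd_gram3_nonneg:
  assumes "psd_matrix (gram3 a b c)"
  shows "nonneg_gram3 a b c"
  unfolding nonneg_gram3_def
proof (intro allI)
  fix v1 v2 v3 :: real
  have "0 \<le> (vector [v1, v2, v3] :: real^3) \<bullet> (gram3 a b c *v vector [v1, v2, v3])"
    using assms unfolding psd_matrix_def by blast
  then show "0 \<le> v1\<^sup>2 + v2\<^sup>2 + v3\<^sup>2 + 2 * a * v1 * v2 + 2 * b * v1 * v3 + 2 * c * v2 * v3"
    by (simp add: gram3_def inner_vec_def matrix_vector_mult_def sum_3 algebra_simps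
        power2_eq_square)
qed

lemma nonneg_gram3_swap_first:
  assumes "nonneg_gram3 a b c"
  shows "nonneg_gram3 b a c"
  unfolding nonneg_gram3_def
proof (intro allI)
  fix v1 v2 v3 :: real
  have "0 \<le> v1\<^sup>2 + v3\<^sup>2 + v2\<^sup>2 + 2 * a * v1 * v3 + 2 * b * v1 * v2 + 2 * c * v3 * v2"
    using assms unfolding nonneg_gram3_def by blast
  then show "0 \<le> v1\<^sup>2 + v2\<^sup>2 + v3\<^sup>2 + 2 * b * v1 * v2 + 2 * a * v1 * v3 + 2 * c * v2 * v3"
    by (simp add: algebra_simps)
qed

lemma nonneg_gram3_swap_last:
  assumes "nonneg_gram3 a b c"
  shows "nonneg_gram3 a c b"
  unfolding nonneg_gram3_def
proof (intro allI)
  fix v1 v2 v3 :: real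
  have "0 \<le> v2\<^sup>2 + v1\<^sup>2 + v3\<^sup>2 + 2 * a * v2 * v1 + 2 * b * v2 * v3 + 2 * c * v1 * v3"
    using assms unfolding nonneg_gram3_def by blast
  then show "0 \<le> v1\<^sup>2 + v2\<^sup>2 + v3\<^sup>2 + 2 * a * v1 * v2 + 2 * c * v1 * v3 + 2 * b * v2 * v3"
    by (simp add: algebra_simps)
qed

lemma mset3_cases:
  assumes "{#x, y, z#} = {#a, b, c#}"
  shows "(x, y, z) \<in> {(a, b, c), (a, c, b), (b, a, c), (b, c, a), (c, a, b), (c, b, a)}"
  using assms by (auto simp: add_eq_conv_ex)

lemma nonneg_gram3_permute:
  assumes "nonneg_gram3 a b c" and "{#x, y, z#} = {#a, b, c#}"
  shows "nonneg_gram3 x y z"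
  using mset3_cases[OF assms(2)] assms(1)
  by (auto intro: nonneg_gram3_swap_first nonneg_gram3_swap_last
      nonneg_gram3_swap_first[OF nonneg_gram3_swap_last]
      nonneg_gram3_swap_last[OF nonneg_gram3_swap_first])

lemma nonneg_gram3_entries_bounded:
  assumes "nonneg_gram3 a b c"
  shows "\<bar>a\<bar> \<le> 1" "\<bar>b\<bar> \<le> 1" "\<bar>c\<bar> \<le> 1"
proof -
  have form: "0 \<le> v1\<^sup>2 + v2\<^sup>2 + v3\<^sup>2 + 2 * a * v1 * v2 + 2 * b * v1 * v3 + 2 * c * v2 * v3"
    for v1 v2 v3 using assms unfolding nonneg_gram3_def by blast
  show "\<bar>a\<bar> \<le> 1" using form[of 1 1 0] form[of 1 "-1" 0] by simp
  show "\<bar>b\<bar> \<le> 1" using form[of 1 0 1] form[of 1 0 "-1"] by simp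
  show "\<bar>c\<bar> \<le> 1" using form[of 0 1 1] form[of 0 1 "-1"] by simp
qed

lemma nonneg_binary_form_discriminant:
  fixes p q r :: real
  assumes form: "\<And>x y. 0 \<le> p * x\<^sup>2 + 2 * r * x * y + q * y\<^sup>2"
  shows "r\<^sup>2 \<le> p * q"
proof -
  have "0 \<le> p" and "0 \<le> q" using form[of 1 0] form[of 0 1] by simp_all
  then consider "0 < p" | "0 < q" | "p = 0" "q = 0" by linarith
  then show ?thesis
  proof cases
    case 1
    have "0 \<le> p * (p * q - r\<^sup>2)"
      using form[of "-r" p] by (simp add: power2_eq_square algebra_simps)
    with 1 show ?thesis by (simp add: zero_le_mult_iff)
  next
    case 2
    have "0 \<le> q * (p * q - r\<^sup>2)"
      using form[of q "-r"] by (simp add: power2_eq_square algebra_simps)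
    with 2 show ?thesis by (simp add: zero_le_mult_iff)
  next
    case 3
    then show ?thesis using form[of r "-1"] by (simp add: power2_eq_square)
  qed
qed

(* Eliminating v3 = -(b v1 + c v2) yields the Schur complement of the (1,1)-block. *)
lemma nonneg_gram3_schur_complement:
  assumes "nonneg_gram3 a b c"
  shows "0 \<le> (1 - b\<^sup>2) * x\<^sup>2 + 2 * (a - b * c) * x * y + (1 - c\<^sup>2) * y\<^sup>2"
proof -
  have "0 \<le> x\<^sup>2 + y\<^sup>2 + (-(b * x + c * y))\<^sup>2 + 2 * a * x * y
            + 2 * b * x * (-(b * x + c * y)) + 2 * c * y * (-(b * x + c * y))"
    using assms unfolding nonneg_gram3_def by blast
  then show ?thesis by (simp add: power2_eq_square algebra_simps)
qed

(* The "cosine of a sum" bound: writing b = cos \<beta>, c = cos \<gamma>, a = cos \<alpha>,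
   it says cos (\<beta> + \<gamma>) \<le> cos \<alpha>. *)
lemma nonneg_gram3_cos_sum_le:
  assumes "nonneg_gram3 a b c"
  shows "b * c - sqrt (1 - b\<^sup>2) * sqrt (1 - c\<^sup>2) \<le> a"
proof -
  have "(a - b * c)\<^sup>2 \<le> (1 - b\<^sup>2) * (1 - c\<^sup>2)"
    by (rule nonneg_binary_form_discriminant) (use nonneg_gram3_schur_complement[OF assms] in auto)
  then have "b * c - a \<le> sqrt ((1 - b\<^sup>2) * (1 - c\<^sup>2))"
    by (intro real_le_rsqrt) (simp add: power2_commute)
  then show ?thesis by (simp add: real_sqrt_mult)
qed

context
  fixes I :: "real set" and f :: "real \<Rightarrow> real"
  assumes decr: "\<forall>p\<in>I. \<forall>q\<in>I. p < q \<longrightarrow> f q < f p"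
    and range: "f ` I = {-1..1}"
begin

lemma decreasing_inj: "inj_on f I"
  by (rule inj_onI) (metis decr linorder_neqE_linordered_idom less_irrefl)

lemma decreasing_inverse:
  assumes "\<bar>u\<bar> \<le> 1"
  shows "inv_into I f u \<in> I" and "f (inv_into I f u) = u"
proof -
  have "u \<in> f ` I" using assms range by auto
  then show "inv_into I f u \<in> I" "f (inv_into I f u) = u"
    by (auto intro: inv_into_into f_inv_into_f)
qed

lemma decreasing_inverse_antimono:
  assumes "\<bar>u\<bar> \<le> 1" "\<bar>w\<bar> \<le> 1" "u \<le> w"
  shows "inv_into I f w \<le> inv_into I f u"
proof (rule ccontr)
  assume "\<not> inv_into I f w \<le> inv_into I f u"
  then have "f (inv_into I f w) < f (inv_into I f u)"
    using decr decreasing_inverse(1) assms(1,2) by simp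
  with assms show False by (simp add: decreasing_inverse)
qed

lemma addition_formula_inverse_subadditive:
  assumes interval: "is_interval I" and nonneg: "I \<subseteq> {0..}"
    and funeq: "\<forall>p q. p \<in> I \<longrightarrow> q \<in> I \<longrightarrow> p + q \<in> I \<longrightarrow>
        f (p + q) = f p * f q - sqrt (1 - (f p)\<^sup>2) * sqrt (1 - (f q)\<^sup>2)"
    and bounds: "\<bar>x\<bar> \<le> 1" "\<bar>y\<bar> \<le> 1" "\<bar>z\<bar> \<le> 1"
    and cos_bound: "y * z - sqrt (1 - y\<^sup>2) * sqrt (1 - z\<^sup>2) \<le> x"
  shows "inv_into I f x \<le> inv_into I f y + inv_into I f z"
proof -
  define p q where "p = inv_into I f y" and "q = inv_into I f z"
  have p: "p \<in> I" "f p = y" and q: "q \<in> I" "f q = z"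
    using decreasing_inverse bounds unfolding p_def q_def by auto
  show ?thesis
  proof (cases "p + q \<in> I")
    case True
    then have "f (p + q) = y * z - sqrt (1 - y\<^sup>2) * sqrt (1 - z\<^sup>2)"
      using funeq p q by simp
    moreover have "\<bar>f (p + q)\<bar> \<le> 1" using True range by (auto simp: abs_le_iff)
    moreover have "inv_into I f (f (p + q)) = p + q"
      using True decreasing_inj by (simp add: inv_into_f_f)
    ultimately show ?thesis
      using decreasing_inverse_antimono[of "f (p + q)" x] bounds cos_bound p_def q_def by simp
  next
    case False
    have "inv_into I f x < p + q"
    proof (rule ccontr)
      assume "\<not> inv_into I f x < p + q"
      moreover have "0 \<le> q" using q nonneg by auto
      ultimately have "p \<le> p + q" "p + q \<le> inv_into I f x" by auto
      then have "p + q \<in> I"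
        using interval decreasing_inverse(1)[OF bounds(1)] p(1) unfolding is_interval_1 by blast
      with False show False by simp
    qed
    then show ?thesis unfolding p_def q_def by simp
  qed
qed

end

theorem proposition1:
  fixes a b c :: real and I :: "real set" and f :: "real \<Rightarrow> real"
  assumes psd: "psd_matrix (gram3 a b c)"
    and interval: "is_interval I" and nonneg: "I \<subseteq> {0..}"
    and decr: "\<forall>p\<in>I. \<forall>q\<in>I. p < q \<longrightarrow> f q < f p"
    and range: "f ` I = {-1..1}"
    and funeq: "\<forall>p q. p \<in> I \<longrightarrow> q \<in> I \<longrightarrow> p + q \<in> I \<longrightarrow>
        f (p + q) = f p * f q - sqrt (1 - (f p)\<^sup>2) * sqrt (1 - (f q)\<^sup>2)"
  shows "\<forall>x y z. {#x, y, z#} = {#a, b, c#} \<longrightarrow>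
           inv_into I f x \<le> inv_into I f y + inv_into I f z"
proof (intro allI impI)
  fix x y z assume arrangement: "{#x, y, z#} = {#a, b, c#}"
  have gram: "nonneg_gram3 x y z"
    using nonneg_gram3_permute[OF psd_gram3_nonneg[OF psd] arrangement] .
  show "inv_into I f x \<le> inv_into I f y + inv_into I f z"
    using addition_formula_inverse_subadditive[OF decr range interval nonneg funeq
        nonneg_gram3_entries_bounded[OF gram] nonneg_gram3_cos_sum_le[OF gram]] .
qed

end
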